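(* Let $\mathcal{H}$ be a Hilbert space, let $C\in\mathcal{B}(\mathcal{H})$ be similar to a contraction, and let $E\in\mathcal{B}(\mathcal{H})$ be a nilpotent operator such that $EC=0$. Then $T=C+E$ is similar to a contraction.
   Context: An operator $R\in\mathcal{B}(\mathcal{H})$ is similar to a contraction if there is an invertible $L\in\mathcal{B}(\mathcal{H})$ with $\|L^{-1}RL\|\le 1$. *)

theory Defs
  imports "HOL-Analysis.Analysis"
begin

text \<open>A complex Hilbert space is modelled as a real Hilbert space
  (class real_inner + complete_space) equipped with an orthogonal complex
  structure J (multiplication by the imaginary unit): J is a bounded linear
  isometry with J o J = -id.  The complex inner product is then
  <x,y>_C = x \<bullet> y + i (x \<bullet> J y), with the same norm.
  Complex-linear bounded operators are exactly the bounded real-linear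
  operators commuting with J.\<close>

definition complex_structure :: "('a::real_inner \<Rightarrow>\<^sub>L 'a) \<Rightarrow> bool" where
  "complex_structure J \<longleftrightarrow> J o\<^sub>L J = - id_blinfun \<and> (\<forall>x. norm (J x) = norm x)"

definition complex_linear :: "('a::real_normed_vector \<Rightarrow>\<^sub>L 'a) \<Rightarrow> ('a \<Rightarrow>\<^sub>L 'a) \<Rightarrow> bool" where
  "complex_linear J A \<longleftrightarrow> A o\<^sub>L J = J o\<^sub>L A"

primrec blinfun_pow :: "('a::real_normed_vector \<Rightarrow>\<^sub>L 'a) \<Rightarrow> nat \<Rightarrow> ('a \<Rightarrow>\<^sub>L 'a)" where
  "blinfun_pow A 0 = id_blinfun"
| "blinfun_pow A (Suc n) = A o\<^sub>L blinfun_pow A n"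

definition nilpotent_op :: "('a::real_normed_vector \<Rightarrow>\<^sub>L 'a) \<Rightarrow> bool" where
  "nilpotent_op A \<longleftrightarrow> (\<exists>n. blinfun_pow A n = 0)"

definition similar_to_contraction :: "('a::real_normed_vector \<Rightarrow>\<^sub>L 'a) \<Rightarrow> ('a \<Rightarrow>\<^sub>L 'a) \<Rightarrow> bool" where
  "similar_to_contraction J R \<longleftrightarrow>
     (\<exists>L Linv. complex_linear J L \<and> complex_linear J Linv \<and>
        L o\<^sub>L Linv = id_blinfun \<and> Linv o\<^sub>L L = id_blinfun \<and>
        norm (Linv o\<^sub>L R o\<^sub>L L) \<le> 1)"

end

theory Submission
  imports Defs
begin

(* Conjugating by the given similarity we may assume norm C <= 1.  Write N = E and T = C + N.
   Since N C = 0 we have T^(j+1) = C T^j + N^(j+1) and N^(k+1) T = N^(k+2), so for N^m = 0 the form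
     q x = (SUM j<=m. |T^j x|^2) - (SUM j<m. |C T^j x|^2) + c (SUM k<m. |N^(k+1) x|^2)
   telescopes to q x - q (T x) = |x|^2 - |C x|^2 + c |N x|^2 >= 0, and for c large Young's
   inequality gives q x >= |x|^2 / 2.  Write q x = <P x, x> with P a sum of operators A* A.
   Then P is self-adjoint and coercive, so P = W o W with W = sqrt c (1 + Y), the fixed point
   Y = (X - Y Y) / 2 of a contraction, where P / c = 1 + X and norm X < 1; finally
   |W T W^-1 y|^2 = q (T W^-1 y) <= q (W^-1 y) = |y|^2.  Adjoints exist by the Riesz
   representation theorem, proved by minimising |z|^2 / 2 - f z.  All these operators
   commute with J, because J is orthogonal with J^2 = -1. *)

section \<open>Completeness of the operator space\<close>

lemma Cauchy_blinfun_uniform_limit: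
  fixes X :: "nat \<Rightarrow> 'a::real_normed_vector \<Rightarrow>\<^sub>L 'b::real_normed_vector"
  assumes "Cauchy X" "\<And>x. (\<lambda>n. X n x) \<longlonglongrightarrow> v x" "e > 0"
  obtains N where "\<And>n x. n \<ge> N \<Longrightarrow> norm (X n x - v x) \<le> e * norm x"
proof -
  obtain N where N: "\<And>m n. m \<ge> N \<Longrightarrow> n \<ge> N \<Longrightarrow> norm (X m - X n) < e"
    using metric_CauchyD[OF assms(1,3)] by (auto simp: dist_norm)
  have "norm (X n x - v x) \<le> e * norm x" if "n \<ge> N" for n x
  proof (rule tendsto_le[OF _ tendsto_const])
    show "(\<lambda>m. norm (X n x - X m x)) \<longlonglongrightarrow> norm (X n x - v x)"
      by (intro tendsto_intros assms(2))
    show "\<forall>\<^sub>F m in sequentially. norm (X n x - X m x) \<le> e * norm x"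
      using eventually_ge_at_top[of N]
    proof eventually_elim
      case (elim m)
      have "norm (X n x - X m x) \<le> norm (X n - X m) * norm x"
        by (metis blinfun.diff_left norm_blinfun)
      also have "\<dots> \<le> e * norm x"
        using N[OF \<open>n \<ge> N\<close> elim] by (simp add: mult_right_mono)
      finally show ?case .
    qed
  qed simp
  then show ?thesis
    using that by blast
qed

(* The library instance requires a target of sort banach, which a type variable of sort
   {real_inner, complete_space} does not have. *)
instance blinfun :: (real_normed_vector, "{real_normed_vector, complete_space}") complete_space
proof
  fix X :: "nat \<Rightarrow> 'a \<Rightarrow>\<^sub>L 'b"
  assume "Cauchy X"
  have "convergent (\<lambda>n. X n x)" for x
    using bounded_linear.Cauchy[OF blinfun.bounded_linear_left \<open>Cauchy X\<close>]
    by (simp add: Cauchy_convergent)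
  then obtain v where v: "\<And>x. (\<lambda>n. X n x) \<longlonglongrightarrow> v x"
    unfolding convergent_def by metis
  note uniform = Cauchy_blinfun_uniform_limit[OF \<open>Cauchy X\<close> v]
  have "bounded_linear v"
  proof
    show "v (x + y) = v x + v y" "v (r *\<^sub>R x) = r *\<^sub>R v x" for x y r
      using v[of "x + y"] tendsto_add[OF v[of x] v[of y]] v[of "r *\<^sub>R x"] tendsto_scaleR[OF tendsto_const v[of x]]
      by (auto simp: blinfun.bilinear_simps intro: LIMSEQ_unique)
    obtain N where N: "\<And>x. norm (X N x - v x) \<le> 1 * norm x"
      using uniform[of 1] by (metis order_refl zero_less_one)
    have "norm (v x) \<le> norm x * (norm (X N) + 1)" for x
      using norm_triangle_ineq4[of "X N x" "X N x - v x"] N[of x] norm_blinfun[of "X N" x]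
      by (simp add: algebra_simps)
    then show "\<exists>K. \<forall>x. norm (v x) \<le> norm x * K" by blast
  qed
  have "X \<longlonglongrightarrow> Blinfun v"
  proof (rule LIMSEQ_I)
    fix r :: real
    assume "r > 0"
    then obtain N where N: "\<And>n x. n \<ge> N \<Longrightarrow> norm (X n x - v x) \<le> r / 2 * norm x"
      using uniform[of "r / 2"] by (metis half_gt_zero)
    have "norm (X n - Blinfun v) < r" if "n \<ge> N" for n
    proof -
      have "norm (X n - Blinfun v) \<le> r / 2"
        using N[OF that] \<open>r > 0\<close> \<open>bounded_linear v\<close>
        by (intro norm_blinfun_bound) (auto simp: blinfun.bilinear_simps bounded_linear_Blinfun_apply)
      then show ?thesis
        using \<open>r > 0\<close> by linarith
    qed
    then show "\<exists>N. \<forall>n\<ge>N. norm (X n - Blinfun v) < r"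
      by blast
  qed
  then show "convergent X"
    by (rule convergentI)
qed

instance blinfun :: (real_normed_vector, "{real_normed_vector, complete_space}") banach ..

section \<open>Operators commuting with the complex structure\<close>

interpretation blinfun_compose: bounded_bilinear "(o\<^sub>L)"
  by (rule bounded_bilinear_blinfun_compose)

lemma blinfun_compose_assoc: "(A o\<^sub>L B) o\<^sub>L C = A o\<^sub>L (B o\<^sub>L C)"
  by (rule blinfun_eqI) simp

lemma blinfun_compose_id [simp]:
  "id_blinfun o\<^sub>L A = A" "A o\<^sub>L id_blinfun = A"
  by (auto intro: blinfun_eqI)

lemma complex_linear_id: "complex_linear J id_blinfun"
  by (simp add: complex_linear_def)

lemma complex_linear_compose:
  "complex_linear J A \<Longrightarrow> complex_linear J B \<Longrightarrow> complex_linear J (A o\<^sub>L B)"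
  unfolding complex_linear_def by (metis blinfun_compose_assoc)

lemma complex_linear_add:
  "complex_linear J A \<Longrightarrow> complex_linear J B \<Longrightarrow> complex_linear J (A + B)"
  by (simp add: complex_linear_def blinfun_compose.add_left blinfun_compose.add_right)

lemma complex_linear_diff:
  "complex_linear J A \<Longrightarrow> complex_linear J B \<Longrightarrow> complex_linear J (A - B)"
  by (simp add: complex_linear_def blinfun_compose.diff_left blinfun_compose.diff_right)

lemma complex_linear_scaleR: "complex_linear J A \<Longrightarrow> complex_linear J (r *\<^sub>R A)"
  by (simp add: complex_linear_def blinfun_compose.scaleR_left blinfun_compose.scaleR_right)

lemma complex_linear_sum:
  "(\<And>i. i \<in> I \<Longrightarrow> complex_linear J (A i)) \<Longrightarrow> complex_linear J (\<Sum>i\<in>I. A i)"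
  by (induction I rule: infinite_finite_induct) (auto intro: complex_linear_add simp: complex_linear_def[of J 0])

lemma complex_linear_pow: "complex_linear J A \<Longrightarrow> complex_linear J (blinfun_pow A n)"
  by (induction n) (auto intro: complex_linear_id complex_linear_compose)

lemma complex_linear_inverse:
  assumes "complex_linear J A" "A o\<^sub>L B = id_blinfun" "B o\<^sub>L A = id_blinfun"
  shows "complex_linear J B"
proof -
  have "B o\<^sub>L J = B o\<^sub>L J o\<^sub>L (A o\<^sub>L B)"
    using assms(2) by simp
  also have "\<dots> = B o\<^sub>L (A o\<^sub>L J) o\<^sub>L B"
    using assms(1) by (simp add: complex_linear_def blinfun_compose_assoc)
  also have "\<dots> = J o\<^sub>L B"
    using assms(3) by (metis blinfun_compose_assoc blinfun_compose_id(1))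
  finally show ?thesis
    unfolding complex_linear_def .
qed

lemma complex_structure_apply_apply:
  assumes "complex_structure J"
  shows "J (J x) = - x"
  using assms unfolding complex_structure_def
  by (metis blinfun.minus_left blinfun_apply_blinfun_compose blinfun_apply_id_blinfun)

lemma complex_structure_inner:
  assumes "complex_structure J"
  shows "J x \<bullet> J y = x \<bullet> y"
proof -
  have norm_J: "norm (J z) = norm z" for z
    using assms by (simp add: complex_structure_def)
  have "x \<bullet> y = ((norm (x + y))\<^sup>2 - (norm (x - y))\<^sup>2) / 4"
       "J x \<bullet> J y = ((norm (J x + J y))\<^sup>2 - (norm (J x - J y))\<^sup>2) / 4"
    by (simp_all add: power2_norm_eq_inner inner_add inner_diff inner_commute)
  then show ?thesis
    by (metis blinfun.add_right blinfun.diff_right norm_J)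
qed

lemma complex_structure_skew:
  assumes "complex_structure J"
  shows "J x \<bullet> y = - (x \<bullet> J y)"
  using complex_structure_inner[OF assms, of x "J y"]
  by (simp add: complex_structure_apply_apply[OF assms])

section \<open>Riesz representation and adjoints\<close>

lemma quadratic_nonneg_imp_linear_coeff_0:
  fixes a b :: real
  assumes "\<And>t. 0 \<le> a * t + b * t\<^sup>2"
  shows "a = 0"
proof (rule ccontr)
  assume "a \<noteq> 0"
  define d where "d = \<bar>b\<bar> + 1"
  have "d > 0" "b - d < 0"
    by (simp_all add: d_def)
  define t where "t = - a / d"
  have "a * t + b * t\<^sup>2 = a\<^sup>2 * (b - d) / d\<^sup>2"
    using \<open>d > 0\<close> by (simp add: t_def power2_eq_square field_simps)
  also have "\<dots> < 0"
    using \<open>a \<noteq> 0\<close> \<open>d > 0\<close> \<open>b - d < 0\<close> by (intro divide_neg_pos mult_pos_neg) auto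
  finally show False
    using assms[of t] by simp
qed

lemma Cauchy_if_dist_square_le:
  fixes z :: "nat \<Rightarrow> 'a::metric_space"
  assumes "\<And>n k. (dist (z n) (z k))\<^sup>2 \<le> \<delta> n + \<delta> k" "\<delta> \<longlonglongrightarrow> 0"
  shows "Cauchy z"
proof (rule metric_CauchyI)
  fix e :: real
  assume "e > 0"
  then have "\<forall>\<^sub>F n in sequentially. \<delta> n < e\<^sup>2 / 2"
    by (intro order_tendstoD(2)[OF assms(2)]) auto
  then obtain N where N: "\<And>n. n \<ge> N \<Longrightarrow> \<delta> n < e\<^sup>2 / 2"
    by (auto simp: eventually_sequentially)
  have "dist (z n) (z k) < e" if "n \<ge> N" "k \<ge> N" for n k
  proof -
    have "(dist (z n) (z k))\<^sup>2 < e\<^sup>2"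
      using assms(1)[of n k] N[OF \<open>n \<ge> N\<close>] N[OF \<open>k \<ge> N\<close>] by linarith
    then show ?thesis
      using \<open>e > 0\<close> by (simp add: power_less_imp_less_base)
  qed
  then show "\<exists>N. \<forall>n\<ge>N. \<forall>k\<ge>N. dist (z n) (z k) < e"
    by blast
qed

lemma exists_minimizer_quadratic_functional:
  fixes f :: "'a::{real_inner, complete_space} \<Rightarrow> real"
  assumes "bounded_linear f"
  obtains z where "\<And>y. (norm z)\<^sup>2 / 2 - f z \<le> (norm y)\<^sup>2 / 2 - f y"
proof -
  interpret f: bounded_linear f by fact
  define \<Phi> where "\<Phi> z = (norm z)\<^sup>2 / 2 - f z" for z
  obtain K where K: "\<And>z. norm (f z) \<le> norm z * K"
    using f.bounded by blast
  have "- K\<^sup>2 / 2 \<le> \<Phi> z" for z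
  proof -
    have "0 \<le> (norm z - K)\<^sup>2 / 2" by simp
    then show ?thesis
      using K[of z] by (simp add: \<Phi>_def power2_eq_square algebra_simps)
  qed
  then have bdd: "bdd_below (range \<Phi>)"
    by (auto simp: bdd_below_def)
  define m where "m = Inf (range \<Phi>)"
  have m_le: "m \<le> \<Phi> y" for y
    unfolding m_def using bdd by (simp add: cInf_lower)
  define \<delta> where "\<delta> n = inverse (real (Suc n))" for n
  have "\<delta> \<longlonglongrightarrow> 0"
    unfolding \<delta>_def by (rule LIMSEQ_inverse_real_of_nat)
  have "\<exists>z. \<Phi> z < m + \<delta> n" for n
    using cInf_lessD[of "range \<Phi>" "m + \<delta> n"] by (auto simp: m_def \<delta>_def)
  then obtain z where z: "\<And>n. \<Phi> (z n) < m + \<delta> n"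
    by metis
  \<comment> \<open>the parallelogram law turns \<Phi> into a uniformly convex functional\<close>
  have "(norm (u - w))\<^sup>2 / 4 = \<Phi> u + \<Phi> w - 2 * \<Phi> ((u + w) /\<^sub>R 2)" for u w
    unfolding \<Phi>_def power2_norm_eq_inner
    by (simp add: inner_add inner_diff f.add f.scaleR inner_commute algebra_simps) (simp add: field_simps)
  then have "(dist (z n) (z k))\<^sup>2 \<le> 4 * \<delta> n + 4 * \<delta> k" for n k
    using m_le[of "(z n + z k) /\<^sub>R 2"] z[of n] z[of k] by (simp add: dist_norm)
  moreover have "(\<lambda>n. 4 * \<delta> n) \<longlonglongrightarrow> 0"
    using tendsto_mult_right_zero[OF \<open>\<delta> \<longlonglongrightarrow> 0\<close>] by simp
  ultimately have "Cauchy z"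
    by (rule Cauchy_if_dist_square_le)
  then obtain z0 where "z \<longlonglongrightarrow> z0"
    by (auto simp: Cauchy_convergent_iff convergent_def)
  then have "(\<lambda>n. \<Phi> (z n)) \<longlonglongrightarrow> \<Phi> z0"
    unfolding \<Phi>_def by (intro tendsto_intros f.tendsto) auto
  moreover have "(\<lambda>n. m + \<delta> n) \<longlonglongrightarrow> m"
    using tendsto_add[OF tendsto_const \<open>\<delta> \<longlonglongrightarrow> 0\<close>] by simp
  ultimately have "\<Phi> z0 \<le> m"
    using z by (intro tendsto_le[of sequentially]) (auto intro: always_eventually less_imp_le)
  then show ?thesis
    using m_le that unfolding \<Phi>_def by (meson order_trans)
qed

theorem riesz_representation:
  fixes f :: "'a::{real_inner, complete_space} \<Rightarrow> real"
  assumes "bounded_linear f"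
  obtains z where "\<And>x. f x = z \<bullet> x"
proof -
  interpret f: bounded_linear f by fact
  obtain z where min: "\<And>y. (norm z)\<^sup>2 / 2 - f z \<le> (norm y)\<^sup>2 / 2 - f y"
    using exists_minimizer_quadratic_functional[OF assms] by blast
  have "z \<bullet> x - f x = 0" for x
  proof (rule quadratic_nonneg_imp_linear_coeff_0)
    fix t
    have "(norm (z + t *\<^sub>R x))\<^sup>2 = (norm z)\<^sup>2 + 2 * t * (z \<bullet> x) + t\<^sup>2 * (norm x)\<^sup>2"
      unfolding power2_norm_eq_inner by (simp add: inner_add inner_commute power2_eq_square algebra_simps)
    then show "0 \<le> (z \<bullet> x - f x) * t + ((norm x)\<^sup>2 / 2) * t\<^sup>2"
      using min[of "z + t *\<^sub>R x"] by (simp add: f.add f.scaleR algebra_simps)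
  qed
  then show ?thesis
    using that[of z] by simp
qed

lemma adjoint_blinfun_exists:
  fixes A :: "'a::{real_inner, complete_space} \<Rightarrow>\<^sub>L 'b::real_inner"
  shows "\<exists>B :: 'b \<Rightarrow>\<^sub>L 'a. \<forall>x y. A x \<bullet> y = x \<bullet> B y"
proof -
  have "\<exists>z. \<forall>x. A x \<bullet> y = z \<bullet> x" for y
    by (metis bounded_linear_compose[OF bounded_linear_inner_left blinfun.bounded_linear_right]
        riesz_representation)
  then obtain B where B: "\<And>x y. A x \<bullet> y = B y \<bullet> x"
    by metis
  have "bounded_linear B"
  proof (rule bounded_linear_intro[where K = "norm A"])
    show "B (y + w) = B y + B w" "B (r *\<^sub>R y) = r *\<^sub>R B y" for y w r
      by (rule vector_eq_rdot[THEN iffD1], simp add: inner_add_left inner_add_right flip: B)+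
    show "norm (B y) \<le> norm y * norm A" for y
    proof -
      have "(norm (B y))\<^sup>2 = A (B y) \<bullet> y"
        by (simp add: B power2_norm_eq_inner)
      also have "\<dots> \<le> norm (A (B y)) * norm y"
        by (rule norm_cauchy_schwarz)
      also have "\<dots> \<le> norm A * norm (B y) * norm y"
        by (intro mult_right_mono norm_blinfun) simp
      finally show ?thesis
        by (cases "B y = 0") (auto simp: power2_eq_square mult_ac)
    qed
  qed
  then have "A x \<bullet> y = x \<bullet> Blinfun B y" for x y
    using B[of x y] by (simp add: bounded_linear_Blinfun_apply inner_commute)
  then show ?thesis
    by blast
qed

definition adjoint_blinfun :: "('a::{real_inner, complete_space} \<Rightarrow>\<^sub>L 'b::real_inner) \<Rightarrow> 'b \<Rightarrow>\<^sub>L 'a"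
  where "adjoint_blinfun A = (SOME B :: 'b \<Rightarrow>\<^sub>L 'a. \<forall>x y. A x \<bullet> y = x \<bullet> B y)"

lemma inner_adjoint_blinfun:
  fixes A :: "'a::{real_inner, complete_space} \<Rightarrow>\<^sub>L 'b::real_inner"
  shows "A x \<bullet> y = x \<bullet> adjoint_blinfun A y"
  unfolding adjoint_blinfun_def using someI_ex[OF adjoint_blinfun_exists[of A]] by blast

lemma inner_adjoint_blinfun_left:
  fixes A :: "'a::{real_inner, complete_space} \<Rightarrow>\<^sub>L 'b::real_inner"
  shows "adjoint_blinfun A y \<bullet> x = y \<bullet> A x"
  using inner_adjoint_blinfun[of A x y] by (simp add: inner_commute)

lemma complex_linear_adjoint_blinfun:
  assumes "complex_structure J" "complex_linear J A"
  shows "complex_linear J (adjoint_blinfun A)"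
  unfolding complex_linear_def
proof (rule blinfun_eqI)
  fix y
  have AJ: "A (J x) = J (A x)" for x
    using assms(2) by (metis blinfun_apply_blinfun_compose complex_linear_def)
  have "adjoint_blinfun A (J y) \<bullet> x = J (adjoint_blinfun A y) \<bullet> x" for x
  proof -
    have "adjoint_blinfun A (J y) \<bullet> x = A x \<bullet> J y"
      using inner_adjoint_blinfun_left[of A "J y" x] by (simp add: inner_commute)
    also have "\<dots> = - (A (J x) \<bullet> y)"
      by (simp add: AJ complex_structure_skew[OF assms(1)])
    also have "\<dots> = - (J x \<bullet> adjoint_blinfun A y)"
      using inner_adjoint_blinfun[of A "J x" y] by simp
    also have "\<dots> = J (adjoint_blinfun A y) \<bullet> x"
      using complex_structure_skew[OF assms(1), of "adjoint_blinfun A y" x] by (simp add: inner_commute)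
    finally show ?thesis .
  qed
  then have "adjoint_blinfun A (J y) = J (adjoint_blinfun A y)"
    using vector_eq_rdot by blast
  then show "(adjoint_blinfun A o\<^sub>L J) y = (J o\<^sub>L adjoint_blinfun A) y"
    by simp
qed

section \<open>Square roots of coercive operators\<close>

definition self_adjoint :: "('a::real_inner \<Rightarrow>\<^sub>L 'a) \<Rightarrow> bool"
  where "self_adjoint A \<longleftrightarrow> (\<forall>x y. A x \<bullet> y = x \<bullet> A y)"

lemma self_adjoint_norm_le:
  fixes X :: "'a::real_inner \<Rightarrow>\<^sub>L 'a"
  assumes "self_adjoint X" "0 \<le> r" "\<And>x. \<bar>X x \<bullet> x\<bar> \<le> r * (norm x)\<^sup>2"
  shows "norm X \<le> r"
proof (rule norm_blinfun_bound[OF \<open>0 \<le> r\<close>])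
  fix x
  show "norm (X x) \<le> r * norm x"
  proof (cases "X x = 0")
    case False
    define t where "t = norm x / norm (X x)"
    have "x \<noteq> 0"
      using False by auto
    \<comment> \<open>polarization of the quadratic form along x \<plusminus> t X x\<close>
    have "4 * t * (norm (X x))\<^sup>2 = X (x + t *\<^sub>R X x) \<bullet> (x + t *\<^sub>R X x) - X (x - t *\<^sub>R X x) \<bullet> (x - t *\<^sub>R X x)"
      using assms(1) unfolding self_adjoint_def power2_norm_eq_inner
      by (simp add: blinfun.bilinear_simps inner_add inner_diff inner_commute algebra_simps)
    also have "\<dots> \<le> r * (norm (x + t *\<^sub>R X x))\<^sup>2 + r * (norm (x - t *\<^sub>R X x))\<^sup>2"
      using assms(3)[of "x + t *\<^sub>R X x"] assms(3)[of "x - t *\<^sub>R X x"] by linarith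
    also have "\<dots> = 2 * r * ((norm x)\<^sup>2 + t\<^sup>2 * (norm (X x))\<^sup>2)"
      unfolding power2_norm_eq_inner
      by (simp add: inner_add inner_diff inner_commute power2_eq_square algebra_simps)
    finally have "4 * t * (norm (X x))\<^sup>2 \<le> 2 * r * ((norm x)\<^sup>2 + t\<^sup>2 * (norm (X x))\<^sup>2)" .
    then show ?thesis
      using False \<open>x \<noteq> 0\<close> by (simp add: t_def power2_eq_square field_simps)
  qed (use assms(2) in simp)
qed

lemma exists_solution_id_plus_contraction:
  fixes \<Phi> :: "'b::{real_normed_vector, complete_space} \<Rightarrow> 'b"
  assumes "linear \<Phi>" "\<And>v. norm (\<Phi> v) \<le> c * norm v" "0 \<le> c" "c < 1"
  obtains v where "v + \<Phi> v = b"
proof -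
  have "dist (b - \<Phi> u) (b - \<Phi> w) \<le> c * dist u w" for u w
    using assms(2)[of "w - u"] by (simp add: dist_norm linear_diff[OF assms(1)] norm_minus_commute)
  then obtain v where "b - \<Phi> v = v"
    using banach_fix_type[where f = "\<lambda>v. b - \<Phi> v" and c = c] assms(3,4) by auto
  then show ?thesis
    by (intro that) (simp add: diff_eq_eq)
qed

lemma id_plus_small_invertible:
  fixes Y :: "'a::{real_normed_vector, complete_space} \<Rightarrow>\<^sub>L 'a"
  assumes "norm Y < 1"
  obtains Z where "(id_blinfun + Y) o\<^sub>L Z = id_blinfun" "Z o\<^sub>L (id_blinfun + Y) = id_blinfun"
proof -
  obtain R where R: "R + (Y o\<^sub>L R) = id_blinfun"
  proof (rule exists_solution_id_plus_contraction[where \<Phi> = "\<lambda>R. Y o\<^sub>L R" and c = "norm Y"])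
    show "linear (\<lambda>R. Y o\<^sub>L R)"
      by (rule bounded_linear.linear[OF blinfun_compose.bounded_linear_right])
  qed (use assms norm_blinfun_compose in auto)
  obtain L where L: "L + (L o\<^sub>L Y) = id_blinfun"
  proof (rule exists_solution_id_plus_contraction[where \<Phi> = "\<lambda>L. L o\<^sub>L Y" and c = "norm Y"])
    show "linear (\<lambda>L. L o\<^sub>L Y)"
      by (rule bounded_linear.linear[OF blinfun_compose.bounded_linear_left])
  qed (use assms norm_blinfun_compose in \<open>auto simp: mult.commute[of "norm Y"]\<close>)
  have right: "(id_blinfun + Y) o\<^sub>L R = id_blinfun"
    using R by (simp add: blinfun_compose.add_left)
  have left: "L o\<^sub>L (id_blinfun + Y) = id_blinfun"
    using L by (simp add: blinfun_compose.add_right)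
  have "L = R"
    by (metis left right blinfun_compose_assoc blinfun_compose_id)
  with left right show ?thesis
    using that by blast
qed

lemma closed_self_adjoint: "closed {A :: 'a::real_inner \<Rightarrow>\<^sub>L 'a. self_adjoint A}"
  unfolding self_adjoint_def
  by (intro closed_Collect_all closed_Collect_eq continuous_intros)

lemma closed_complex_linear: "closed {A. complex_linear J A}"
  unfolding complex_linear_def
  by (intro closed_Collect_eq continuous_intros)

lemma norm_half_diff_square_le:
  assumes "norm X \<le> 2 * \<rho> - \<rho>\<^sup>2" "norm Y \<le> \<rho>"
  shows "norm ((1 / 2) *\<^sub>R (X - (Y o\<^sub>L Y))) \<le> \<rho>"
proof -
  have "norm ((1 / 2) *\<^sub>R (X - (Y o\<^sub>L Y))) \<le> (norm X + norm Y * norm Y) / 2"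
    using norm_triangle_ineq4[of X "Y o\<^sub>L Y"] norm_blinfun_compose[of Y Y] by simp
  also have "\<dots> \<le> (norm X + \<rho> * \<rho>) / 2"
    using assms(2) by (simp add: mult_mono')
  finally show ?thesis
    using assms(1) by (simp add: power2_eq_square)
qed

lemma dist_half_diff_square_le:
  assumes "norm A \<le> \<rho>" "norm B \<le> \<rho>"
  shows "dist ((1 / 2) *\<^sub>R (X - (A o\<^sub>L A))) ((1 / 2) *\<^sub>R (X - (B o\<^sub>L B))) \<le> \<rho> * dist A B"
proof -
  have "(A o\<^sub>L A) - (B o\<^sub>L B) = (A o\<^sub>L (A - B)) + ((A - B) o\<^sub>L B)"
    by (simp add: blinfun_compose.diff_left blinfun_compose.diff_right)
  then have "norm ((A o\<^sub>L A) - (B o\<^sub>L B)) \<le> norm A * norm (A - B) + norm (A - B) * norm B"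
    by (metis add_mono norm_blinfun_compose norm_triangle_le)
  also have "\<dots> \<le> \<rho> * norm (A - B) + norm (A - B) * \<rho>"
    using assms by (intro add_mono mult_right_mono mult_left_mono) auto
  finally show ?thesis
    by (simp add: dist_norm algebra_simps norm_minus_commute[of "B o\<^sub>L B"] flip: scaleR_diff_right)
qed

lemma sqrt_id_plus_self_adjoint:
  fixes X :: "'a::{real_inner, complete_space} \<Rightarrow>\<^sub>L 'a"
  assumes X: "self_adjoint X" "complex_linear J X" "norm X < 1"
  obtains Y where "self_adjoint Y" "complex_linear J Y" "norm Y < 1"
    "(id_blinfun + Y) o\<^sub>L (id_blinfun + Y) = id_blinfun + X"
proof -
  define \<rho> where "\<rho> = 1 - sqrt (1 - norm X)"
  have "0 \<le> \<rho>" "\<rho> < 1"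
    using X(3) by (auto simp: \<rho>_def)
  have norm_X: "norm X = 2 * \<rho> - \<rho>\<^sup>2"
    using X(3) by (simp add: \<rho>_def power2_eq_square algebra_simps)
  define S where "S = {Y. norm Y \<le> \<rho> \<and> self_adjoint Y \<and> complex_linear J Y}"
  define F where "F Y = (1 / 2) *\<^sub>R (X - (Y o\<^sub>L Y))" for Y
  \<comment> \<open>(id + Y) o (id + Y) = id + X iff Y = F Y, and F is a contraction of S into itself\<close>
  have "complete S"
    unfolding S_def complete_eq_closed
    by (intro closed_Collect_conj closed_self_adjoint closed_complex_linear closed_Collect_le continuous_intros)
  moreover have "0 \<in> S"
    using \<open>0 \<le> \<rho>\<close> by (simp add: S_def self_adjoint_def complex_linear_def)
  moreover have "F ` S \<subseteq> S"
  proof safe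
    fix Y
    assume "Y \<in> S"
    then have Y: "norm Y \<le> \<rho>" "self_adjoint Y" "complex_linear J Y"
      by (auto simp: S_def)
    have "norm (F Y) \<le> \<rho>"
      unfolding F_def using norm_half_diff_square_le[OF _ Y(1)] norm_X by simp
    moreover have "self_adjoint (F Y)"
      using X(1) Y(2) by (simp add: F_def self_adjoint_def blinfun.bilinear_simps inner_diff)
    moreover have "complex_linear J (F Y)"
      unfolding F_def by (intro complex_linear_scaleR complex_linear_diff complex_linear_compose X Y)
    ultimately show "F Y \<in> S"
      by (simp add: S_def)
  qed
  moreover have "dist (F A) (F B) \<le> \<rho> * dist A B" if "A \<in> S" "B \<in> S" for A B
    using that unfolding F_def S_def by (intro dist_half_diff_square_le) auto
  ultimately obtain Y where "Y \<in> S" "F Y = Y"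
    using Banach_fix[of S \<rho> F] \<open>0 \<le> \<rho>\<close> \<open>\<rho> < 1\<close> by blast
  have "X - (Y o\<^sub>L Y) = 2 *\<^sub>R ((1 / 2) *\<^sub>R (X - (Y o\<^sub>L Y)))"
    by simp
  also have "\<dots> = 2 *\<^sub>R Y"
    by (simp only: F_def[symmetric] \<open>F Y = Y\<close>)
  finally have "X = Y + Y + (Y o\<^sub>L Y)"
    by (simp add: diff_eq_eq scaleR_2)
  then have "(id_blinfun + Y) o\<^sub>L (id_blinfun + Y) = id_blinfun + X"
    by (simp add: blinfun_compose.add_left blinfun_compose.add_right algebra_simps)
  with \<open>Y \<in> S\<close> \<open>\<rho> < 1\<close> show ?thesis
    by (intro that) (auto simp: S_def)
qed

lemma inner_le_norm_blinfun:
  fixes A :: "'a::real_inner \<Rightarrow>\<^sub>L 'a"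
  shows "A x \<bullet> x \<le> norm A * (norm x)\<^sup>2"
proof -
  have "A x \<bullet> x \<le> norm (A x) * norm x"
    by (rule norm_cauchy_schwarz)
  also have "\<dots> \<le> norm A * norm x * norm x"
    by (intro mult_right_mono norm_blinfun) simp
  finally show ?thesis
    by (simp add: power2_eq_square mult.assoc)
qed

lemma coercive_scaled_minus_id_norm_less:
  fixes P :: "'a::real_inner \<Rightarrow>\<^sub>L 'a"
  assumes "self_adjoint P" "0 < \<epsilon>" "\<And>x. \<epsilon> * (norm x)\<^sup>2 \<le> P x \<bullet> x"
  shows "norm ((1 / (norm P + \<epsilon>)) *\<^sub>R P - id_blinfun) < 1"
proof -
  define c where "c = norm P + \<epsilon>"
  define X where "X = (1 / c) *\<^sub>R P - id_blinfun"
  have "0 < c" "\<epsilon> \<le> c"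
    using assms(2) norm_ge_zero[of P] unfolding c_def by linarith+
  have "\<bar>X x \<bullet> x\<bar> \<le> (1 - \<epsilon> / c) * (norm x)\<^sup>2" for x
  proof -
    have "0 \<le> \<epsilon> * (norm x)\<^sup>2 / c" "\<epsilon> * (norm x)\<^sup>2 / c \<le> (P x \<bullet> x) / c"
      "(P x \<bullet> x) / c \<le> (c - \<epsilon>) * (norm x)\<^sup>2 / c"
      using assms(2,3) inner_le_norm_blinfun[of P x] \<open>0 < c\<close>
      by (auto intro: divide_right_mono simp: c_def)
    then show ?thesis
      using \<open>0 < c\<close> by (simp add: X_def blinfun.bilinear_simps inner_diff_left power2_norm_eq_inner
          diff_divide_distrib algebra_simps)
  qed
  moreover have "self_adjoint X"
    using assms(1) by (simp add: X_def self_adjoint_def blinfun.bilinear_simps inner_diff)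
  ultimately have "norm X \<le> 1 - \<epsilon> / c"
    using \<open>\<epsilon> \<le> c\<close> \<open>0 < c\<close> by (intro self_adjoint_norm_le) auto
  also have "\<dots> < 1"
    using assms(2) \<open>0 < c\<close> by simp
  finally show ?thesis
    by (simp add: X_def c_def)
qed

lemma coercive_self_adjoint_factorization:
  fixes P :: "'a::{real_inner, complete_space} \<Rightarrow>\<^sub>L 'a"
  assumes P: "self_adjoint P" "complex_linear J P"
    and coercive: "0 < \<epsilon>" "\<And>x. \<epsilon> * (norm x)\<^sup>2 \<le> P x \<bullet> x"
  obtains W W' where "complex_linear J W" "complex_linear J W'"
    "W o\<^sub>L W' = id_blinfun" "W' o\<^sub>L W = id_blinfun" "\<And>x. (norm (W x))\<^sup>2 = P x \<bullet> x"
proof -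
  define c where "c = norm P + \<epsilon>"
  have "0 < c"
    using coercive(1) norm_ge_zero[of P] unfolding c_def by linarith
  define X where "X = (1 / c) *\<^sub>R P - id_blinfun"
  have "self_adjoint X"
    using P(1) by (simp add: X_def self_adjoint_def blinfun.bilinear_simps inner_diff)
  moreover have "complex_linear J X"
    unfolding X_def by (intro complex_linear_diff complex_linear_scaleR complex_linear_id P)
  moreover have "norm X < 1"
    unfolding X_def c_def by (rule coercive_scaled_minus_id_norm_less[OF P(1) coercive])
  ultimately obtain Y where Y: "self_adjoint Y" "complex_linear J Y" "norm Y < 1"
    and sqrt: "(id_blinfun + Y) o\<^sub>L (id_blinfun + Y) = (1 / c) *\<^sub>R P"
    using sqrt_id_plus_self_adjoint by (metis X_def add.commute diff_add_cancel)
  obtain Z where Z: "(id_blinfun + Y) o\<^sub>L Z = id_blinfun" "Z o\<^sub>L (id_blinfun + Y) = id_blinfun"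
    using id_plus_small_invertible[OF \<open>norm Y < 1\<close>] by blast
  have cl: "complex_linear J (id_blinfun + Y)"
    by (intro complex_linear_add complex_linear_id Y)
  define W where "W = sqrt c *\<^sub>R (id_blinfun + Y)"
  define W' where "W' = (1 / sqrt c) *\<^sub>R Z"
  have "complex_linear J W" "complex_linear J W'"
    unfolding W_def W'_def using cl complex_linear_inverse[OF cl Z]
    by (auto intro: complex_linear_scaleR)
  moreover have "W o\<^sub>L W' = id_blinfun" "W' o\<^sub>L W = id_blinfun"
    using Z \<open>0 < c\<close>
    by (simp_all add: W_def W'_def blinfun_compose.scaleR_left blinfun_compose.scaleR_right)
  moreover have "(norm (W x))\<^sup>2 = P x \<bullet> x" for x
  proof -
    have "(norm (W x))\<^sup>2 = c * ((id_blinfun + Y) x \<bullet> (id_blinfun + Y) x)"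
      using \<open>0 < c\<close> by (simp add: W_def blinfun.scaleR_left power_mult_distrib flip: power2_norm_eq_inner)
    also have "\<dots> = c * (((id_blinfun + Y) o\<^sub>L (id_blinfun + Y)) x \<bullet> x)"
      using Y(1) by (simp add: self_adjoint_def blinfun.bilinear_simps inner_add)
    also have "\<dots> = P x \<bullet> x"
      using \<open>0 < c\<close> by (simp add: sqrt blinfun.scaleR_left)
    finally show ?thesis .
  qed
  ultimately show ?thesis
    using that by blast
qed

theorem similar_to_contraction_if_lyapunov:
  fixes T P :: "'a::{real_inner, complete_space} \<Rightarrow>\<^sub>L 'a"
  assumes "self_adjoint P" "complex_linear J P"
    and "0 < \<epsilon>" "\<And>x. \<epsilon> * (norm x)\<^sup>2 \<le> P x \<bullet> x"
    and decreasing: "\<And>x. P (T x) \<bullet> T x \<le> P x \<bullet> x"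
  shows "similar_to_contraction J T"
proof -
  obtain W W' where W: "complex_linear J W" "complex_linear J W'"
    "W o\<^sub>L W' = id_blinfun" "W' o\<^sub>L W = id_blinfun" and norm_W: "\<And>x. (norm (W x))\<^sup>2 = P x \<bullet> x"
    using coercive_self_adjoint_factorization assms(1-4) by blast
  have "norm (W o\<^sub>L T o\<^sub>L W') \<le> 1"
  proof (rule norm_blinfun_bound)
    fix y
    have "W (W' y) = y"
      using W(3) by (metis blinfun_apply_blinfun_compose blinfun_apply_id_blinfun)
    then have "(norm y)\<^sup>2 = P (W' y) \<bullet> W' y"
      using norm_W[of "W' y"] by simp
    then have "(norm ((W o\<^sub>L T o\<^sub>L W') y))\<^sup>2 \<le> (norm y)\<^sup>2"
      using decreasing[of "W' y"] by (simp add: norm_W)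
    then show "norm ((W o\<^sub>L T o\<^sub>L W') y) \<le> 1 * norm y"
      by (simp add: power2_le_iff_abs_le)
  qed simp
  with W show ?thesis
    unfolding similar_to_contraction_def by blast
qed

section \<open>A Lyapunov form for a contraction plus a nilpotent\<close>

lemma blinfun_pow_add: "blinfun_pow A (m + n) = blinfun_pow A m o\<^sub>L blinfun_pow A n"
  by (induction m) (simp_all add: blinfun_compose_assoc)

lemma blinfun_pow_apply_Suc: "blinfun_pow A n (A x) = blinfun_pow A (Suc n) x"
  using blinfun_pow_add[of A n 1] by (simp add: add.commute)

lemma blinfun_pow_Suc_compose_pow_add:
  assumes "N o\<^sub>L C = 0"
  shows "blinfun_pow N (Suc k) o\<^sub>L blinfun_pow (C + N) j = blinfun_pow N (Suc k + j)"
proof (induction j arbitrary: k)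
  case 0
  then show ?case by simp
next
  case (Suc j)
  have "blinfun_pow N (Suc k) o\<^sub>L (C + N) = blinfun_pow N k o\<^sub>L ((N o\<^sub>L C) + (N o\<^sub>L N))"
    using blinfun_pow_add[of N k 1] by (simp add: blinfun_compose_assoc blinfun_compose.add_right)
  also have "\<dots> = blinfun_pow N (Suc (Suc k))"
    using assms blinfun_pow_add[of N k 2] by (simp add: numeral_2_eq_2 blinfun_compose_assoc)
  finally have "blinfun_pow N (Suc k) o\<^sub>L (C + N) = blinfun_pow N (Suc (Suc k))" .
  then show ?case
    using Suc.IH[of "Suc k"] by (simp flip: blinfun_compose_assoc)
qed

lemma blinfun_pow_add_Suc_expand:
  assumes "N o\<^sub>L C = 0"
  shows "blinfun_pow (C + N) (Suc j) = (C o\<^sub>L blinfun_pow (C + N) j) + blinfun_pow N (Suc j)"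
  using blinfun_pow_Suc_compose_pow_add[OF assms, of 0 j] by (simp add: blinfun_compose.add_left)

lemma young_norm_square:
  fixes u v :: "'a::real_inner"
  assumes "0 < c"
  shows "(norm u)\<^sup>2 \<le> (norm (u + v))\<^sup>2 + (norm u)\<^sup>2 / c + c * (norm v)\<^sup>2"
proof -
  have "0 \<le> (norm (u + c *\<^sub>R v))\<^sup>2 / c"
    using assms by simp
  also have "\<dots> = (norm u)\<^sup>2 / c + 2 * (u \<bullet> v) + c * (norm v)\<^sup>2"
    using assms unfolding power2_norm_eq_inner
    by (simp add: inner_add inner_commute power2_eq_square field_simps)
  finally have "0 \<le> (norm u)\<^sup>2 / c + 2 * (u \<bullet> v) + c * (norm v)\<^sup>2" .
  then show ?thesis
    unfolding power2_norm_eq_inner by (simp add: inner_add inner_commute) (use inner_ge_zero[of v] in linarith)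
qed

definition lyapunov_form :: "real \<Rightarrow> nat \<Rightarrow> ('a::real_normed_vector \<Rightarrow>\<^sub>L 'a) \<Rightarrow> ('a \<Rightarrow>\<^sub>L 'a) \<Rightarrow> 'a \<Rightarrow> real"
  where "lyapunov_form c m C N x =
    (\<Sum>j\<le>m. (norm (blinfun_pow (C + N) j x))\<^sup>2) - (\<Sum>j<m. (norm (C (blinfun_pow (C + N) j x)))\<^sup>2)
      + c * (\<Sum>k<m. (norm (blinfun_pow N (Suc k) x))\<^sup>2)"

lemma lyapunov_form_diff_apply:
  assumes "N o\<^sub>L C = 0" "blinfun_pow N m = 0"
  shows "lyapunov_form c m C N x - lyapunov_form c m C N ((C + N) x)
    = (norm x)\<^sup>2 - (norm (C x))\<^sup>2 + c * (norm (N x))\<^sup>2"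
proof -
  define T where "T = C + N"
  define a where "a j = (norm (blinfun_pow T j x))\<^sup>2" for j
  define b where "b j = (norm (C (blinfun_pow T j x)))\<^sup>2" for j
  define g where "g k = (norm (blinfun_pow N k x))\<^sup>2" for k
  have "blinfun_pow N (Suc k) o\<^sub>L T = blinfun_pow N (Suc (Suc k))" for k
    using blinfun_pow_Suc_compose_pow_add[OF assms(1), of k 1] by (simp add: T_def)
  then have N_T: "blinfun_pow N (Suc k) (T x) = blinfun_pow N (Suc (Suc k)) x" for k
    by (metis blinfun_apply_blinfun_compose)
  have "blinfun_pow T (Suc m) = C o\<^sub>L blinfun_pow T m"
    using blinfun_pow_add_Suc_expand[OF assms(1), of m] assms(2) by (simp add: T_def)
  then have "a (Suc m) = b m"
    by (simp add: a_def b_def)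
  moreover have "g (Suc m) = 0"
    using assms(2) by (simp add: g_def)
  moreover have "lyapunov_form c m C N x = (\<Sum>j\<le>m. a j) - (\<Sum>j<m. b j) + c * (\<Sum>k<m. g (Suc k))"
    by (simp add: lyapunov_form_def a_def b_def g_def T_def)
  moreover have "lyapunov_form c m C N (T x)
      = (\<Sum>j\<le>m. a (Suc j)) - (\<Sum>j<m. b (Suc j)) + c * (\<Sum>k<m. g (Suc (Suc k)))"
    unfolding lyapunov_form_def a_def b_def g_def T_def[symmetric] blinfun_pow_apply_Suc N_T by (rule refl)
  moreover have "(\<Sum>j\<le>m. a (Suc j)) = (\<Sum>j\<le>m. a j) + a (Suc m) - a 0"
    using sum.atMost_Suc_shift[of a m] by simp
  moreover have "(\<Sum>j<m. b (Suc j)) = (\<Sum>j<m. b j) + b m - b 0"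
    using sum.lessThan_Suc_shift[of b m] by simp
  moreover have "(\<Sum>k<m. g (Suc (Suc k))) = (\<Sum>k<m. g (Suc k)) + g (Suc m) - g 1"
    using sum.lessThan_Suc_shift[of "\<lambda>k. g (Suc k)" m] by simp
  ultimately have "lyapunov_form c m C N x - lyapunov_form c m C N (T x) = a 0 - b 0 + c * g 1"
    by (simp add: algebra_simps)
  then show ?thesis
    by (simp add: a_def b_def g_def T_def)
qed

lemma lyapunov_form_decreasing:
  assumes "norm C \<le> 1" "N o\<^sub>L C = 0" "blinfun_pow N m = 0" "0 \<le> c"
  shows "lyapunov_form c m C N ((C + N) x) \<le> lyapunov_form c m C N x"
proof -
  have "norm (C x) \<le> norm x"
    using norm_blinfun[of C x] mult_right_mono[OF assms(1) norm_ge_zero[of x]] by simp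
  then have "(norm (C x))\<^sup>2 \<le> (norm x)\<^sup>2"
    by (simp add: power_mono)
  moreover have "0 \<le> c * (norm (N x))\<^sup>2"
    using assms(4) by simp
  ultimately show ?thesis
    using lyapunov_form_diff_apply[OF assms(2,3), of c x] by linarith
qed

lemma lyapunov_form_eq_sum:
  "lyapunov_form c m C N x = (norm x)\<^sup>2 + (\<Sum>j<m. (norm (blinfun_pow (C + N) (Suc j) x))\<^sup>2
    - (norm (C (blinfun_pow (C + N) j x)))\<^sup>2 + c * (norm (blinfun_pow N (Suc j) x))\<^sup>2)"
proof -
  have "(\<Sum>j\<le>m. f j) = f 0 + (\<Sum>j<m. f (Suc j))" for f :: "nat \<Rightarrow> real"
    using sum.lessThan_Suc_shift[of f m] by (simp add: lessThan_Suc_atMost)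
  then show ?thesis
    by (simp add: lyapunov_form_def sum.distrib sum_subtractf sum_distrib_left del: blinfun_pow.simps(2))
qed

lemma lyapunov_form_lower_bound:
  fixes C N :: "'a::real_inner \<Rightarrow>\<^sub>L 'a"
  assumes "N o\<^sub>L C = 0" "0 < c" "2 * (\<Sum>j<m. (norm (C o\<^sub>L blinfun_pow (C + N) j))\<^sup>2) \<le> c"
  shows "(norm x)\<^sup>2 / 2 \<le> lyapunov_form c m C N x"
proof -
  define T where "T = C + N"
  define K where "K j = (norm (C o\<^sub>L blinfun_pow T j))\<^sup>2" for j
  have "- (K j * (norm x)\<^sup>2 / c) \<le> (norm (blinfun_pow T (Suc j) x))\<^sup>2
      - (norm (C (blinfun_pow T j x)))\<^sup>2 + c * (norm (blinfun_pow N (Suc j) x))\<^sup>2" for j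
  proof -
    have "blinfun_pow T (Suc j) x = C (blinfun_pow T j x) + blinfun_pow N (Suc j) x"
      using blinfun_pow_add_Suc_expand[OF assms(1), of j] by (simp add: T_def blinfun.add_left)
    then have "(norm (C (blinfun_pow T j x)))\<^sup>2 \<le> (norm (blinfun_pow T (Suc j) x))\<^sup>2
        + (norm (C (blinfun_pow T j x)))\<^sup>2 / c + c * (norm (blinfun_pow N (Suc j) x))\<^sup>2"
      using young_norm_square[OF assms(2)] by simp
    moreover have "(norm (C (blinfun_pow T j x)))\<^sup>2 \<le> K j * (norm x)\<^sup>2"
      using norm_blinfun[of "C o\<^sub>L blinfun_pow T j" x]
      by (simp add: K_def power_mono flip: power_mult_distrib)
    then have "(norm (C (blinfun_pow T j x)))\<^sup>2 / c \<le> K j * (norm x)\<^sup>2 / c"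
      using assms(2) by (simp add: divide_right_mono)
    ultimately show ?thesis
      by linarith
  qed
  then have "(\<Sum>j<m. - (K j * (norm x)\<^sup>2 / c)) \<le> lyapunov_form c m C N x - (norm x)\<^sup>2"
    unfolding lyapunov_form_eq_sum T_def[symmetric] by (simp add: sum_mono del: blinfun_pow.simps(2))
  moreover have "2 * (\<Sum>j<m. K j) * (norm x)\<^sup>2 \<le> c * (norm x)\<^sup>2"
    using assms(3) by (intro mult_right_mono) (simp_all add: K_def T_def)
  then have "(\<Sum>j<m. K j * (norm x)\<^sup>2 / c) \<le> (norm x)\<^sup>2 / 2"
    using assms(2) by (simp add: field_simps flip: sum_distrib_right sum_divide_distrib)
  ultimately show ?thesis
    by (simp add: sum_negf)
qed

theorem similar_to_contraction_contraction_plus_nilpotent: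
  fixes J C N :: "'a::{real_inner, complete_space} \<Rightarrow>\<^sub>L 'a"
  assumes J: "complex_structure J" and "complex_linear J C" "complex_linear J N"
    and "norm C \<le> 1" "N o\<^sub>L C = 0" "blinfun_pow N m = 0"
  shows "similar_to_contraction J (C + N)"
proof -
  define T where "T = C + N"
  define c where "c = 2 * (\<Sum>j<m. (norm (C o\<^sub>L blinfun_pow T j))\<^sup>2) + 1"
  have "0 < c"
    by (simp add: c_def sum_nonneg add_nonneg_pos)
  define P where "P = (\<Sum>j\<le>m. adjoint_blinfun (blinfun_pow T j) o\<^sub>L blinfun_pow T j)
    - (\<Sum>j<m. adjoint_blinfun (C o\<^sub>L blinfun_pow T j) o\<^sub>L (C o\<^sub>L blinfun_pow T j))
    + c *\<^sub>R (\<Sum>k<m. adjoint_blinfun (blinfun_pow N (Suc k)) o\<^sub>L blinfun_pow N (Suc k))"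
  have P_inner: "P x \<bullet> y = (\<Sum>j\<le>m. blinfun_pow T j x \<bullet> blinfun_pow T j y)
    - (\<Sum>j<m. C (blinfun_pow T j x) \<bullet> C (blinfun_pow T j y))
    + c * (\<Sum>k<m. blinfun_pow N (Suc k) x \<bullet> blinfun_pow N (Suc k) y)" for x y
    by (simp add: P_def blinfun.bilinear_simps inner_diff_left inner_add_left inner_sum_left
        inner_adjoint_blinfun_left del: blinfun_pow.simps)
  have "P x \<bullet> y = P y \<bullet> x" for x y
    by (simp only: P_inner) (simp add: inner_commute)
  then have "self_adjoint P"
    by (simp add: self_adjoint_def inner_commute)
  moreover have "complex_linear J P"
    unfolding P_def T_def
    by (intro complex_linear_add complex_linear_diff complex_linear_scaleR complex_linear_sum
        complex_linear_compose complex_linear_adjoint_blinfun[OF J] complex_linear_pow assms(2,3))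
  moreover have lyapunov: "P x \<bullet> x = lyapunov_form c m C N x" for x
    by (simp add: P_inner lyapunov_form_def T_def power2_norm_eq_inner del: blinfun_pow.simps)
  moreover have "1 / 2 * (norm x)\<^sup>2 \<le> P x \<bullet> x" for x
    using lyapunov_form_lower_bound[OF assms(5) \<open>0 < c\<close>, of m x] by (simp add: lyapunov c_def T_def)
  moreover have "P (T x) \<bullet> T x \<le> P x \<bullet> x" for x
    using lyapunov_form_decreasing[OF assms(4-6), of c x] \<open>0 < c\<close> by (simp add: lyapunov T_def)
  ultimately show ?thesis
    unfolding T_def by (intro similar_to_contraction_if_lyapunov[where P = P and \<epsilon> = "1 / 2"]) auto
qed

lemma blinfun_pow_conj:
  assumes "L o\<^sub>L L' = id_blinfun" "L' o\<^sub>L L = id_blinfun"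
  shows "blinfun_pow (L' o\<^sub>L A o\<^sub>L L) n = L' o\<^sub>L blinfun_pow A n o\<^sub>L L"
proof (induction n)
  case 0
  then show ?case using assms(2) by simp
next
  case (Suc n)
  have "blinfun_pow (L' o\<^sub>L A o\<^sub>L L) (Suc n) = L' o\<^sub>L A o\<^sub>L (L o\<^sub>L L') o\<^sub>L blinfun_pow A n o\<^sub>L L"
    using Suc.IH by (simp add: blinfun_compose_assoc)
  then show ?case
    using assms(1) by simp (simp add: blinfun_compose_assoc)
qed

lemma similar_to_contraction_conj:
  assumes L: "complex_linear J L" "complex_linear J L'" "L o\<^sub>L L' = id_blinfun" "L' o\<^sub>L L = id_blinfun"
    and "similar_to_contraction J (L' o\<^sub>L T o\<^sub>L L)"
  shows "similar_to_contraction J T"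
proof -
  obtain M M' where M: "complex_linear J M" "complex_linear J M'" "M o\<^sub>L M' = id_blinfun"
    "M' o\<^sub>L M = id_blinfun" "norm (M' o\<^sub>L (L' o\<^sub>L T o\<^sub>L L) o\<^sub>L M) \<le> 1"
    using assms(5) unfolding similar_to_contraction_def by blast
  have "(L o\<^sub>L M) o\<^sub>L (M' o\<^sub>L L') = L o\<^sub>L (M o\<^sub>L M') o\<^sub>L L'"
    "(M' o\<^sub>L L') o\<^sub>L (L o\<^sub>L M) = M' o\<^sub>L (L' o\<^sub>L L) o\<^sub>L M"
    by (simp_all add: blinfun_compose_assoc)
  then have "(L o\<^sub>L M) o\<^sub>L (M' o\<^sub>L L') = id_blinfun" "(M' o\<^sub>L L') o\<^sub>L (L o\<^sub>L M) = id_blinfun"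
    using L(3,4) M(3,4) by simp_all
  moreover have "M' o\<^sub>L L' o\<^sub>L T o\<^sub>L (L o\<^sub>L M) = M' o\<^sub>L (L' o\<^sub>L T o\<^sub>L L) o\<^sub>L M"
    by (simp add: blinfun_compose_assoc)
  moreover have "complex_linear J (L o\<^sub>L M)" "complex_linear J (M' o\<^sub>L L')"
    using L M by (simp_all add: complex_linear_compose)
  ultimately show ?thesis
    unfolding similar_to_contraction_def using M(5) by metis
qed

theorem corollary3p4:
  fixes J C E :: "'a::{real_inner, complete_space} \<Rightarrow>\<^sub>L 'a"
  assumes "complex_structure J"
    and "complex_linear J C" and "complex_linear J E"
    and "similar_to_contraction J C"
    and "nilpotent_op E"
    and "E o\<^sub>L C = 0"
  shows "similar_to_contraction J (C + E)"
proof -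
  obtain L L' where L: "complex_linear J L" "complex_linear J L'"
    "L o\<^sub>L L' = id_blinfun" "L' o\<^sub>L L = id_blinfun" and contraction: "norm (L' o\<^sub>L C o\<^sub>L L) \<le> 1"
    using assms(4) unfolding similar_to_contraction_def by blast
  obtain m where "blinfun_pow E m = 0"
    using assms(5) unfolding nilpotent_op_def by blast
  then have "blinfun_pow (L' o\<^sub>L E o\<^sub>L L) m = 0"
    by (simp add: blinfun_pow_conj[OF L(3,4)])
  moreover have "(L' o\<^sub>L E o\<^sub>L L) o\<^sub>L (L' o\<^sub>L C o\<^sub>L L) = L' o\<^sub>L E o\<^sub>L (L o\<^sub>L L') o\<^sub>L C o\<^sub>L L"
    by (simp add: blinfun_compose_assoc)
  then have "(L' o\<^sub>L E o\<^sub>L L) o\<^sub>L (L' o\<^sub>L C o\<^sub>L L) = 0"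
    using L(3) assms(6) by (simp add: blinfun_compose_assoc)
  ultimately have "similar_to_contraction J ((L' o\<^sub>L C o\<^sub>L L) + (L' o\<^sub>L E o\<^sub>L L))"
    using contraction L assms(1-3)
    by (intro similar_to_contraction_contraction_plus_nilpotent) (simp_all add: complex_linear_compose)
  moreover have "(L' o\<^sub>L C o\<^sub>L L) + (L' o\<^sub>L E o\<^sub>L L) = L' o\<^sub>L (C + E) o\<^sub>L L"
    by (simp add: blinfun_compose.add_left blinfun_compose.add_right)
  ultimately show ?thesis
    using similar_to_contraction_conj[OF L] by simp
qed

end
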